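(* Let $\tau$ be a decorated ideal triangulation of $S$ with underlying ideal triangulation $\lambda$, and let $\tau'$ be obtained from $\tau$ by a reindexing, a mark rotation or a diagonal exchange, with underlying ideal triangulation $\lambda'$. For every exponential Kashaev coordinate vector $(y_1,z_1,\dots,y_{2m},z_{2m})\in\mathbb R_{>0}^{4m}$ of $\tau$, let $(y',z')$ be its Kashaev coordinate change to $\tau'$, let $x=F_\tau(y,z)$ and $x'=F_{\tau'}(y',z')$. Then $x'$ is the shear coordinate change of $x$ from $\lambda$ to $\lambda'$: $x'=x$ if $\tau'$ is obtained by a reindexing or a mark rotation, and $x'$ is given by the diagonal exchange formulas in the context if $\tau'=\varphi_{\mu\nu}(\tau)$.
   Context: Let $\bar S$ be a closed oriented surface of genus $g$, $S=\bar S\setminus\{v_1,\dots,v_p\}$, $p\ge1$, $m:=2g-2+p>0$. An ideal triangulation has $3m$ edges and $2m$ triangles (triangulation of $\bar S$ with vertex set $\{v_1,\dots,v_p\}$; two sides of a triangle may lie on the same edge). A decorated ideal triangulation $\tau$ has triangles numbered $\tau_1,\dots,\tau_{2m}$ and a marked corner in each; forgetting numbering and marks gives its underlying ideal triangulation $\lambda$, whose edges are indexed $\lambda_1,\dots,\lambda_{3m}$. Sides of $\tau_\mu$ are numbered $0,1,2$ counterclockwise, the $0$-side opposite the marked corner. Moves: reindexing $\alpha(\tau)$ ($k$-th triangle is $\tau_{\alpha(k)}$); mark rotation $\rho_i$ (mark of $\tau_i$ moves to the next corner counterclockwise); diagonal exchange $\varphi_{\mu\nu}$, applicable when distinct $\tau_\mu,\tau_\nu$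 share an edge which is the $0$-side of both: write the quadrilateral $\tau_\mu\cup\tau_\nu$ with corners $P,Q,R,T$ in counterclockwise order, $\tau_\mu=TPQ$ marked at $P$, $\tau_\nu=QRT$ marked at $R$, common edge $\lambda_i=QT$, and $\lambda_j=TP$, $\lambda_k=RT$, $\lambda_l=QR$, $\lambda_m=PQ$ (some of $\lambda_j,\lambda_k,\lambda_l,\lambda_m$ may coincide); $\varphi_{\mu\nu}(\tau)$ replaces $QT$ by $PR$, with new $\mu$-th triangle $RTP$ marked at $T$ and new $\nu$-th triangle $PQR$ marked at $Q$, others unchanged; $\lambda'$ has edges $\lambda'_h=\lambda_h$ for $h\ne i$ and $\lambda'_i=PR$. For reindexings and mark rotations $\lambda'=\lambda$ with the same edge indexing. Kashaev coordinate change (exponential coordinates): reindexing: $(y'_k,z'_k)=(y_{\alpha(k)},z_{\alpha(k)})$; mark rotation $\rho_i$: $(y'_i,z'_i)=(z_i/y_i,1/y_i)$, others unchanged; diagonal exchange $\varphi_{\mu\nu}$: $y'_\mu=z_\nu/D$, $z'_\mu=y_\mu/D$, $y'_\nu=z_\mu/D$, $z'_\nu=y_\nu/D$ with $D=y_\mu y_\nu+z_\mu z_\nu$, others unchanged. The map $F_\tau:\mathbb R_{>0}^{4m}\to\mathbb R_{>0}^{3m}$: set $h^0_\mu=y_\mu/z_\mu$, $h^1_\mu=z_\mu$, $h^2_\mu=1/y_\mu$ and $x_h=h^s_\mu h^t_\nu$ whenever $\lambda_h$ bounds the $s$-side of $\tau_\mu$ and the $t$-side of $\tau_\nu$. Shear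 coordinate change for the diagonal exchange at $\lambda_i$: $x'_h=x_h$ for $h\notin\{i,j,k,l,m\}$, $x'_i=x_i^{-1}$, and: Case 1 ($\lambda_j,\lambda_k,\lambda_l,\lambda_m$ distinct): $x'_j=(1+x_i)x_j$, $x'_k=(1+x_i^{-1})^{-1}x_k$, $x'_l=(1+x_i)x_l$, $x'_m=(1+x_i^{-1})^{-1}x_m$; Case 2 ($\lambda_j=\lambda_k$, $\lambda_l\ne\lambda_m$): $x'_j=x_ix_j$, $x'_l=(1+x_i)x_l$, $x'_m=(1+x_i^{-1})^{-1}x_m$; Case 3 ($\lambda_j=\lambda_m$, $\lambda_k\neq\lambda_l$): $x'_j=x_ix_j$, $x'_k=(1+x_i^{-1})^{-1}x_k$, $x'_l=(1+x_i)x_l$; Case 4 ($\lambda_j=\lambda_l$, $\lambda_k\ne\lambda_m$): $x'_j=(1+x_i)^2x_j$, $x'_k=(1+x_i^{-1})^{-1}x_k$, $x'_m=(1+x_i^{-1})^{-1}x_m$; Case 5 ($\lambda_k=\lambda_m$, $\lambda_j\ne\lambda_l$): $x'_j=(1+x_i)x_j$, $x'_k=(1+x_i^{-1})^{-2}x_k$, $x'_l=(1+x_i)x_l$; Case 6 ($\lambda_j=\lambda_k$ and $\lambda_l=\lambda_m$): $x'_j=x_ix_j$, $x'_l=x_ix_l$; Case 7 ($\lambda_j=\lambda_m$ and $\lambda_k=\lambda_l$): $x'_j=x_ix_j$, $x'_k=x_ix_k$; Case 8 ($\lambda_j=\lambda_l$ and $\lambda_k=\lambda_m$): $x'_j=(1+x_i)^2x_j$,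 $x'_k=(1+x_i^{-1})^{-2}x_k$. *)

theory Defs
  imports Complex_Main
begin

text \<open>A decorated ideal triangulation with
  parameter m has triangles 0..2m-1 and edges 0..3m-1; it is given by the side map
  e, where e mu s is the index of the edge of the underlying ideal triangulation
  carrying the s-side of triangle mu (sides numbered 0,1,2 counterclockwise,
  the 0-side opposite the marked corner).  Gluing oriented triangles along a perfect
  pairing of their sides yields a closed oriented surface; connectedness of the
  gluing makes it a single surface whose punctures are the vertices.\<close>

definition tri_adj :: "nat \<Rightarrow> (nat \<Rightarrow> nat \<Rightarrow> nat) \<Rightarrow> (nat \<times> nat) set" where
  "tri_adj m e = {(mu, nu). mu < 2*m \<and> nu < 2*m \<and>
      (\<exists>s t. s < 3 \<and> t < 3 \<and> e mu s = e nu t)}"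

definition sides_of_edge :: "nat \<Rightarrow> (nat \<Rightarrow> nat \<Rightarrow> nat) \<Rightarrow> nat \<Rightarrow> (nat \<times> nat) set" where
  "sides_of_edge m e h = {(mu, s). mu < 2*m \<and> s < 3 \<and> e mu s = h}"

definition decorated_ideal_triangulation :: "nat \<Rightarrow> (nat \<Rightarrow> nat \<Rightarrow> nat) \<Rightarrow> bool" where
  "decorated_ideal_triangulation m e \<longleftrightarrow>
     0 < m \<and>
     (\<forall>mu < 2*m. \<forall>s < 3. e mu s < 3*m) \<and>
     (\<forall>h < 3*m. card (sides_of_edge m e h) = 2) \<and>
     (\<forall>mu < 2*m. \<forall>nu < 2*m. (mu, nu) \<in> (tri_adj m e)\<^sup>*)"

datatype move = Reindex "nat \<Rightarrow> nat" | Rotate nat | Exchange nat nat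

fun move_applicable :: "nat \<Rightarrow> (nat \<Rightarrow> nat \<Rightarrow> nat) \<Rightarrow> move \<Rightarrow> bool" where
  "move_applicable m e (Reindex alpha) = bij_betw alpha {..<2*m} {..<2*m}"
| "move_applicable m e (Rotate i) = (i < 2*m)"
| "move_applicable m e (Exchange mu nu) =
     (mu < 2*m \<and> nu < 2*m \<and> mu \<noteq> nu \<and> e mu 0 = e nu 0)"

text \<open>For the exchange: with
  i = e mu 0 = e nu 0 (QT), j = e mu 1 (TP), m' = e mu 2 (PQ), l = e nu 1 (QR),
  k = e nu 2 (RT); new mu = RTP marked at T has sides (PR, RT, TP) = (i, k, j),
  new nu = PQR marked at Q has sides (RP, PQ, QR) = (i, m', l).\<close>

fun move_tri :: "move \<Rightarrow> (nat \<Rightarrow> nat \<Rightarrow> nat) \<Rightarrow> (nat \<Rightarrow> nat \<Rightarrow> nat)" where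
  "move_tri (Reindex alpha) e = (\<lambda>k. e (alpha k))"
| "move_tri (Rotate i) e = e(i := (\<lambda>s. e i ((s + 1) mod 3)))"
| "move_tri (Exchange mu nu) e =
     e(mu := (\<lambda>s. if s = 0 then e mu 0 else if s = 1 then e nu 2 else e mu 1),
       nu := (\<lambda>s. if s = 0 then e nu 0 else if s = 1 then e mu 2 else e nu 1))"

fun kashaev_change :: "move \<Rightarrow> (nat \<Rightarrow> real) \<times> (nat \<Rightarrow> real) \<Rightarrow> (nat \<Rightarrow> real) \<times> (nat \<Rightarrow> real)" where
  "kashaev_change (Reindex alpha) (y, z) = ((\<lambda>k. y (alpha k)), (\<lambda>k. z (alpha k)))"
| "kashaev_change (Rotate i) (y, z) = (y(i := z i / y i), z(i := 1 / y i))"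
| "kashaev_change (Exchange mu nu) (y, z) =
     (let D = y mu * y nu + z mu * z nu in
      (y(mu := z nu / D, nu := z mu / D), z(mu := y mu / D, nu := y nu / D)))"

definition hcoord :: "(nat \<Rightarrow> real) \<Rightarrow> (nat \<Rightarrow> real) \<Rightarrow> nat \<Rightarrow> nat \<Rightarrow> real" where
  "hcoord y z mu s = (if s = 0 then y mu / z mu else if s = 1 then z mu else 1 / y mu)"

definition F_map :: "nat \<Rightarrow> (nat \<Rightarrow> nat \<Rightarrow> nat) \<Rightarrow> (nat \<Rightarrow> real) \<Rightarrow> (nat \<Rightarrow> real) \<Rightarrow> nat \<Rightarrow> real" where
  "F_map m e y z h = (\<Prod>(mu, s) \<in> sides_of_edge m e h. hcoord y z mu s)"

text \<open>Shear coordinate change for the diagonal exchange at edge i, with the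
  surrounding edges j (TP), k (RT), l (QR), mm (PQ).  Cases 1--8 as in the paper;
  the two remaining configurations (l = mm alone, k = l alone) are the mirror images
  of cases 2 and 3 (obtained by exchanging the roles of the two triangles).\<close>

definition shear_flip :: "nat \<Rightarrow> nat \<Rightarrow> nat \<Rightarrow> nat \<Rightarrow> nat \<Rightarrow> (nat \<Rightarrow> real) \<Rightarrow> nat \<Rightarrow> real" where
  "shear_flip i j k l mm x h =
    (let a = (1 + x i); b = inverse (1 + inverse (x i)) in
     if h = i then inverse (x i)
     else if distinct [j, k, l, mm] then
       (if h = j then a * x j else if h = k then b * x k
        else if h = l then a * x l else if h = mm then b * x mm else x h)
     else if j = k \<and> l = mm then
       (if h = j then x i * x j else if h = l then x i * x l else x h)
     else if j = mm \<and> k = l then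
       (if h = j then x i * x j else if h = k then x i * x k else x h)
     else if j = l \<and> k = mm then
       (if h = j then a^2 * x j else if h = k then b^2 * x k else x h)
     else if j = k then
       (if h = j then x i * x j else if h = l then a * x l else if h = mm then b * x mm else x h)
     else if j = mm then
       (if h = j then x i * x j else if h = k then b * x k else if h = l then a * x l else x h)
     else if j = l then
       (if h = j then a^2 * x j else if h = k then b * x k else if h = mm then b * x mm else x h)
     else if k = mm then
       (if h = j then a * x j else if h = k then b^2 * x k else if h = l then a * x l else x h)
     else if l = mm then
       (if h = l then x i * x l else if h = j then a * x j else if h = k then b * x k else x h)
     else if k = l then
       (if h = k then x i * x k else if h = j then a * x j else if h = mm then b * x mm else x h)
     else x h)"

fun shear_change :: "(nat \<Rightarrow> nat \<Rightarrow> nat) \<Rightarrow> move \<Rightarrow> (nat \<Rightarrow> real) \<Rightarrow> (nat \<Rightarrow> real)" where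
  "shear_change e (Reindex alpha) x = x"
| "shear_change e (Rotate i) x = x"
| "shear_change e (Exchange mu nu) x =
     shear_flip (e mu 0) (e mu 1) (e nu 2) (e nu 1) (e mu 2) x"

end

theory Submission
  imports Defs
begin

(*
  Each move comes with a bijection between the sides of tau' and those of tau that
  preserves the edge a side lies on.  For a reindexing or a mark rotation it also preserves the
  h-coordinates.  For the diagonal exchange phi_{mu nu}, with x_i = y_mu y_nu / (z_mu z_nu) the
  coordinate of the flipped edge, the h-coordinate of a side of tau_mu or tau_nu is multiplied by
  1 + x_i on the 1-sides, by x_i / (1 + x_i) on the 2-sides, and by z_mu z_nu / y_mu^2 resp.
  z_mu z_nu / y_nu^2 on the 0-sides.  Since an edge carries exactly two sides, multiplying these
  factors over the sides of each edge produces the eight cases of the shear coordinate change.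
*)

lemma finite_sides_of_edge: "finite (sides_of_edge m e h)"
  by (rule finite_subset[of _ "{..<2*m} \<times> {..<3}"]) (auto simp: sides_of_edge_def)

lemma mem_sides_of_edge_iff:
  "r < 2*m \<Longrightarrow> s < 3 \<Longrightarrow> (r, s) \<in> sides_of_edge m e h \<longleftrightarrow> e r s = h"
  by (simp add: sides_of_edge_def)

lemma sides_of_edge_no_three:
  assumes "decorated_ideal_triangulation m e" "h < 3*m"
    and "p \<in> sides_of_edge m e h" "q \<in> sides_of_edge m e h" "r \<in> sides_of_edge m e h"
    and "p \<noteq> q" "p \<noteq> r" "q \<noteq> r"
  shows False
proof -
  have "card {p, q, r} \<le> card (sides_of_edge m e h)"
    using assms(3-5) by (intro card_mono finite_sides_of_edge) auto
  moreover have "card (sides_of_edge m e h) = 2"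
    using assms(1,2) unfolding decorated_ideal_triangulation_def by auto
  ultimately show False
    using assms(6-8) by auto
qed

lemma sides_of_edge_eq_pair:
  assumes "decorated_ideal_triangulation m e" "h < 3*m"
    and "p \<in> sides_of_edge m e h" "q \<in> sides_of_edge m e h" "p \<noteq> q"
  shows "sides_of_edge m e h = {p, q}"
  using sides_of_edge_no_three[OF assms(1-4)] assms(3-5) by blast

lemma less_3_cases: "(s::nat) < 3 \<Longrightarrow> s = 0 \<or> s = 1 \<or> s = 2"
  by auto

lemma prod_sides_of_edge_pullback:
  assumes bij: "bij_betw \<sigma> ({..<2*m} \<times> {..<3}) ({..<2*m} \<times> {..<3})"
    and edges: "\<And>r s. r < 2*m \<Longrightarrow> s < 3 \<Longrightarrow> e' r s = case_prod e (\<sigma> (r, s))"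
  shows "(\<Prod>p\<in>sides_of_edge m e' h. g (\<sigma> p)) = (\<Prod>p\<in>sides_of_edge m e h. g p)"
proof -
  have "\<sigma> p \<in> sides_of_edge m e h" if side: "p \<in> sides_of_edge m e' h" for p
  proof -
    obtain r s where p: "p = (r, s)" "r < 2*m" "s < 3" "e' r s = h"
      using side by (auto simp: sides_of_edge_def)
    then have "\<sigma> p \<in> {..<2*m} \<times> {..<3}"
      using bij_betwE[OF bij] by blast
    then show ?thesis
      using p edges by (auto simp: sides_of_edge_def split: prod.splits)
  qed
  moreover have "q \<in> \<sigma> ` sides_of_edge m e' h" if side: "q \<in> sides_of_edge m e h" for q
  proof -
    have "q \<in> \<sigma> ` ({..<2*m} \<times> {..<3})"
      using side bij_betw_imp_surj_on[OF bij] by (auto simp: sides_of_edge_def)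
    then obtain r s where rs: "r < 2*m" "s < 3" "\<sigma> (r, s) = q"
      by auto
    then have "e' r s = h"
      using side edges[of r s] by (auto simp: sides_of_edge_def)
    with rs show ?thesis
      by (force simp: sides_of_edge_def)
  qed
  ultimately have "\<sigma> ` sides_of_edge m e' h = sides_of_edge m e h"
    by blast
  moreover have "inj_on \<sigma> (sides_of_edge m e' h)"
    using bij unfolding bij_betw_def by (rule inj_on_subset[OF conjunct1]) (auto simp: sides_of_edge_def)
  ultimately show ?thesis
    using prod.reindex[of \<sigma> "sides_of_edge m e' h" g] by simp
qed

lemma F_map_pullback:
  assumes "bij_betw \<sigma> ({..<2*m} \<times> {..<3}) ({..<2*m} \<times> {..<3})"
    and "\<And>r s. r < 2*m \<Longrightarrow> s < 3 \<Longrightarrow> e' r s = case_prod e (\<sigma> (r, s))"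
    and "\<And>r s. r < 2*m \<Longrightarrow> s < 3 \<Longrightarrow>
           hcoord y' z' r s = case_prod (hcoord y z) (\<sigma> (r, s)) * w (\<sigma> (r, s))"
  shows "F_map m e' y' z' h = F_map m e y z h * (\<Prod>p\<in>sides_of_edge m e h. w p)"
proof -
  have "F_map m e' y' z' h = (\<Prod>p\<in>sides_of_edge m e' h. (\<lambda>q. case_prod (hcoord y z) q * w q) (\<sigma> p))"
    unfolding F_map_def using assms(3) by (intro prod.cong) (auto simp: sides_of_edge_def)
  also have "\<dots> = (\<Prod>p\<in>sides_of_edge m e h. case_prod (hcoord y z) p * w p)"
    by (rule prod_sides_of_edge_pullback[OF assms(1,2)])
  finally show ?thesis
    by (simp add: F_map_def prod.distrib)
qed

lemma F_map_reindex:
  assumes "bij_betw \<alpha> {..<2*m} {..<2*m}"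
  shows "F_map m (move_tri (Reindex \<alpha>) e) (fst (kashaev_change (Reindex \<alpha>) (y, z)))
           (snd (kashaev_change (Reindex \<alpha>) (y, z))) h = F_map m e y z h"
  using F_map_pullback[where \<sigma> = "map_prod \<alpha> id" and w = "\<lambda>_. 1"]
    bij_betw_map_prod[OF assms bij_betw_id[of "{..<3::nat}"]]
  by (simp add: hcoord_def)

lemma F_map_rotate:
  assumes "y i \<noteq> 0"
  shows "F_map m (move_tri (Rotate i) e) (fst (kashaev_change (Rotate i) (y, z)))
           (snd (kashaev_change (Rotate i) (y, z))) h = F_map m e y z h"
proof -
  define \<sigma> where "\<sigma> = (\<lambda>(r, s). (r, if r = i then (s + 1) mod 3 else s :: nat))"
  have "bij_betw \<sigma> ({..<2*m} \<times> {..<3}) ({..<2*m} \<times> {..<3})"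
    by (rule bij_betw_byWitness[where f' = "\<lambda>(r, s). (r, if r = i then (s + 2) mod 3 else s)"])
      (auto simp: \<sigma>_def dest!: less_3_cases)
  moreover have "hcoord (y(i := z i / y i)) (z(i := 1 / y i)) r s
      = case_prod (hcoord y z) (\<sigma> (r, s))" if "s < 3" for r s
    using that assms by (cases "r = i") (auto simp: \<sigma>_def hcoord_def dest!: less_3_cases)
  ultimately show ?thesis
    using F_map_pullback[where \<sigma> = \<sigma> and w = "\<lambda>_. 1"] by (simp add: \<sigma>_def)
qed

definition exchange_sides :: "nat \<Rightarrow> nat \<Rightarrow> nat \<times> nat \<Rightarrow> nat \<times> nat" where
  "exchange_sides mu nu p =
     (if p = (mu, 1) then (nu, 2) else if p = (nu, 2) then (nu, 1)
      else if p = (nu, 1) then (mu, 2) else if p = (mu, 2) then (mu, 1) else p)"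

definition exchange_factor :: "nat \<Rightarrow> nat \<Rightarrow> (nat \<Rightarrow> real) \<Rightarrow> (nat \<Rightarrow> real) \<Rightarrow> nat \<times> nat \<Rightarrow> real" where
  "exchange_factor mu nu y z p =
     (let x = y mu * y nu / (z mu * z nu); a = 1 + x; b = inverse (1 + inverse x) in
      (if p = (mu, 0) then z mu * z nu / (y mu)\<^sup>2 else 1) * (if p = (nu, 0) then z mu * z nu / (y nu)\<^sup>2 else 1)
      * (if p = (mu, 1) then a else 1) * (if p = (nu, 1) then a else 1)
      * (if p = (mu, 2) then b else 1) * (if p = (nu, 2) then b else 1))"

lemma bij_betw_exchange_sides:
  assumes "mu < 2*m" "nu < 2*m"
  shows "bij_betw (exchange_sides mu nu) ({..<2*m} \<times> {..<3}) ({..<2*m} \<times> {..<3})"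
proof (rule bij_betw_byWitness[where f' = "\<lambda>p. if p = (mu, 2) then (nu, 1) else if p = (nu, 1) then (nu, 2)
                                  else if p = (nu, 2) then (mu, 1) else if p = (mu, 1) then (mu, 2) else p"])
qed (use assms in \<open>auto simp: exchange_sides_def\<close>)

lemma move_tri_exchange:
  assumes "mu \<noteq> nu" "s < 3"
  shows "move_tri (Exchange mu nu) e r s = case_prod e (exchange_sides mu nu (r, s))"
  using assms by (auto simp: exchange_sides_def dest!: less_3_cases)

lemma hcoord_exchange:
  assumes "mu \<noteq> nu" "s < 3" "0 < y mu" "0 < y nu" "0 < z mu" "0 < z nu"
  shows "hcoord (fst (kashaev_change (Exchange mu nu) (y, z))) (snd (kashaev_change (Exchange mu nu) (y, z))) r s
       = case_prod (hcoord y z) (exchange_sides mu nu (r, s)) * exchange_factor mu nu y z (exchange_sides mu nu (r, s))"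
proof -
  define D where "D = y mu * y nu + z mu * z nu"
  have D_eq: "y mu * y nu + z mu * z nu = D"
    by (simp add: D_def)
  have "0 < D"
    using assms by (simp add: D_def add_pos_pos)
  have kashaev: "kashaev_change (Exchange mu nu) (y, z) = (y(mu := z nu / D, nu := z mu / D), z(mu := y mu / D, nu := y nu / D))"
    by (simp add: D_def Let_def)
  have one_plus_x: "1 + y mu * y nu / (z mu * z nu) = D / (z mu * z nu)"
    using assms by (simp add: D_def field_simps)
  have x_over_one_plus_x: "inverse (1 + inverse (y mu * y nu / (z mu * z nu))) = y mu * y nu / D"
    using assms \<open>0 < D\<close> by (simp add: D_def field_simps)
  consider "r = mu" "s = 0" | "r = mu" "s = 1" | "r = mu" "s = 2"
    | "r = nu" "s = 0" | "r = nu" "s = 1" | "r = nu" "s = 2" | "r \<noteq> mu" "r \<noteq> nu"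
    using assms(2) by force
  then show ?thesis
    using assms \<open>0 < D\<close>
    by cases (simp_all add: kashaev hcoord_def exchange_sides_def exchange_factor_def one_plus_x x_over_one_plus_x D_eq field_simps power2_eq_square
        del: kashaev_change.simps)
qed

lemma F_map_exchange_factor:
  assumes "mu < 2*m" "nu < 2*m" "mu \<noteq> nu" "0 < y mu" "0 < y nu" "0 < z mu" "0 < z nu"
  shows "F_map m (move_tri (Exchange mu nu) e) (fst (kashaev_change (Exchange mu nu) (y, z)))
           (snd (kashaev_change (Exchange mu nu) (y, z))) h
       = F_map m e y z h * (\<Prod>p\<in>sides_of_edge m e h. exchange_factor mu nu y z p)"
  using assms by (intro F_map_pullback[where \<sigma> = "exchange_sides mu nu"]
                   bij_betw_exchange_sides move_tri_exchange hcoord_exchange)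

lemma prod_exchange_factor:
  assumes "mu < 2*m" "nu < 2*m" and x: "x = y mu * y nu / (z mu * z nu)"
  shows "(\<Prod>p\<in>sides_of_edge m e h. exchange_factor mu nu y z p)
       = (if h = e mu 0 then z mu * z nu / (y mu)\<^sup>2 else 1) * (if h = e nu 0 then z mu * z nu / (y nu)\<^sup>2 else 1)
         * (if h = e mu 1 then 1 + x else 1) * (if h = e nu 1 then 1 + x else 1)
         * (if h = e mu 2 then inverse (1 + inverse x) else 1) * (if h = e nu 2 then inverse (1 + inverse x) else 1)"
proof -
  have "(r, s) \<in> sides_of_edge m e h \<longleftrightarrow> h = e r s" if "r < 2*m" "s < 3" for r s
    using that by (auto simp: sides_of_edge_def)
  then show ?thesis
    unfolding exchange_factor_def Let_def x[symmetric] prod.distrib prod.delta[OF finite_sides_of_edge]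
    using assms(1,2) by simp
qed

lemma shear_flip_at_diagonal: "shear_flip i j k l mm x i = inverse (x i)"
  by (simp add: shear_flip_def)

lemma shear_flip_eq_mult_factors:
  fixes x :: "nat \<Rightarrow> real"
  assumes "0 < x i" "h \<noteq> i"
    and "\<not> (h = j \<and> h = k \<and> h = l)" "\<not> (h = j \<and> h = k \<and> h = mm)"
    and "\<not> (h = j \<and> h = l \<and> h = mm)" "\<not> (h = k \<and> h = l \<and> h = mm)"
  shows "shear_flip i j k l mm x h
       = (if h = j then 1 + x i else 1) * (if h = k then inverse (1 + inverse (x i)) else 1)
           * (if h = l then 1 + x i else 1) * (if h = mm then inverse (1 + inverse (x i)) else 1) * x h"
proof -
  define a b where "a = 1 + x i" and "b = inverse (1 + inverse (x i))"
  have "a * b = x i" "b * a = x i"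
    using assms(1) by (simp_all add: a_def b_def field_simps)
  then show ?thesis
    using assms(2-) unfolding shear_flip_def Let_def a_def[symmetric] b_def[symmetric]
    by (cases "h = j"; cases "h = k"; cases "h = l"; cases "h = mm"; simp add: power2_eq_square)
qed

lemma sides_of_edge_no_three_outer:
  assumes dec: "decorated_ideal_triangulation m e" and h: "h < 3*m"
    and mu: "mu < 2*m" and nu: "nu < 2*m" and "mu \<noteq> nu"
  shows "\<not> (h = e mu 1 \<and> h = e nu 2 \<and> h = e nu 1)" "\<not> (h = e mu 1 \<and> h = e nu 2 \<and> h = e mu 2)"
    "\<not> (h = e mu 1 \<and> h = e nu 1 \<and> h = e mu 2)" "\<not> (h = e nu 2 \<and> h = e nu 1 \<and> h = e mu 2)"
proof -
  have no_three: "\<not> (p \<in> sides_of_edge m e h \<and> q \<in> sides_of_edge m e h \<and> r \<in> sides_of_edge m e h)"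
    if "distinct [p, q, r]" for p q r
    using sides_of_edge_no_three[OF dec h, of p q r] that by auto
  show "\<not> (h = e mu 1 \<and> h = e nu 2 \<and> h = e nu 1)"
    using no_three[of "(mu, 1)" "(nu, 2)" "(nu, 1)"] \<open>mu \<noteq> nu\<close> mu nu by (simp add: mem_sides_of_edge_iff eq_commute[of h])
  show "\<not> (h = e mu 1 \<and> h = e nu 2 \<and> h = e mu 2)"
    using no_three[of "(mu, 1)" "(nu, 2)" "(mu, 2)"] \<open>mu \<noteq> nu\<close> mu nu by (simp add: mem_sides_of_edge_iff eq_commute[of h])
  show "\<not> (h = e mu 1 \<and> h = e nu 1 \<and> h = e mu 2)"
    using no_three[of "(mu, 1)" "(nu, 1)" "(mu, 2)"] \<open>mu \<noteq> nu\<close> mu nu by (simp add: mem_sides_of_edge_iff eq_commute[of h])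
  show "\<not> (h = e nu 2 \<and> h = e nu 1 \<and> h = e mu 2)"
    using no_three[of "(nu, 2)" "(nu, 1)" "(mu, 2)"] \<open>mu \<noteq> nu\<close> mu nu by (simp add: mem_sides_of_edge_iff eq_commute[of h])
qed

lemma F_map_exchange:
  assumes dec: "decorated_ideal_triangulation m e"
    and applicable: "move_applicable m e (Exchange mu nu)"
    and pos: "0 < y mu" "0 < y nu" "0 < z mu" "0 < z nu"
    and h: "h < 3*m"
  shows "F_map m (move_tri (Exchange mu nu) e) (fst (kashaev_change (Exchange mu nu) (y, z)))
           (snd (kashaev_change (Exchange mu nu) (y, z))) h
       = shear_change e (Exchange mu nu) (F_map m e y z) h"
proof -
  have mu: "mu < 2*m" and nu: "nu < 2*m" and "mu \<noteq> nu" and diagonal: "e mu 0 = e nu 0"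
    using applicable by auto
  define i where "i = e mu 0"
  define x where "x = F_map m e y z"
  have "i < 3*m"
    using dec mu unfolding decorated_ideal_triangulation_def i_def by auto
  then have sides_i: "sides_of_edge m e i = {(mu, 0), (nu, 0)}"
    using \<open>mu \<noteq> nu\<close> by (intro sides_of_edge_eq_pair[OF dec]) (auto simp: sides_of_edge_def mu nu i_def diagonal)
  then have x_i: "x i = y mu * y nu / (z mu * z nu)"
    using \<open>mu \<noteq> nu\<close> by (simp add: x_def F_map_def hcoord_def)
  define F' where "F' = F_map m (move_tri (Exchange mu nu) e) (fst (kashaev_change (Exchange mu nu) (y, z)))
           (snd (kashaev_change (Exchange mu nu) (y, z)))"
  have "F' h = x h * (\<Prod>p\<in>sides_of_edge m e h. exchange_factor mu nu y z p)"
    unfolding F'_def x_def by (rule F_map_exchange_factor[OF mu nu \<open>mu \<noteq> nu\<close> pos])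
  also have "\<dots> = x h * ((if h = i then z mu * z nu / (y mu)\<^sup>2 else 1) * (if h = i then z mu * z nu / (y nu)\<^sup>2 else 1)
        * (if h = e mu 1 then 1 + x i else 1) * (if h = e nu 1 then 1 + x i else 1)
        * (if h = e mu 2 then inverse (1 + inverse (x i)) else 1) * (if h = e nu 2 then inverse (1 + inverse (x i)) else 1))"
    using prod_exchange_factor[OF mu nu x_i] by (simp add: i_def diagonal)
  finally have F'_h: "F' h = \<dots>" .
  have "F' h = shear_flip i (e mu 1) (e nu 2) (e nu 1) (e mu 2) x h"
  proof (cases "h = i")
    case True
    have "e mu 1 \<noteq> h" "e nu 1 \<noteq> h" "e mu 2 \<noteq> h" "e nu 2 \<noteq> h"
      using sides_i True mu nu by (auto simp flip: mem_sides_of_edge_iff)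
    with True F'_h have "F' h = x i * (z mu * z nu / (y mu)\<^sup>2) * (z mu * z nu / (y nu)\<^sup>2)"
      by simp
    also have "\<dots> = inverse (x i)"
      using pos by (simp add: x_i field_simps power2_eq_square)
    finally show ?thesis
      using True by (simp add: shear_flip_at_diagonal)
  next
    case False
    have "0 < x i"
      using pos by (simp add: x_i)
    moreover note sides_of_edge_no_three_outer[OF dec h mu nu \<open>mu \<noteq> nu\<close>]
    ultimately show ?thesis
      using F'_h False shear_flip_eq_mult_factors[of x i h "e mu 1" "e nu 2" "e nu 1" "e mu 2"]
      by (simp add: mult_ac)
  qed
  then show ?thesis
    by (simp add: F'_def x_def i_def)
qed

theorem proposition4p4:
  fixes m :: nat and e :: "nat \<Rightarrow> nat \<Rightarrow> nat" and mv :: move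
    and y z :: "nat \<Rightarrow> real"
  assumes "decorated_ideal_triangulation m e"
    and "move_applicable m e mv"
    and "\<forall>mu < 2*m. 0 < y mu \<and> 0 < z mu"
  shows "\<forall>h < 3*m.
           F_map m (move_tri mv e) (fst (kashaev_change mv (y, z))) (snd (kashaev_change mv (y, z))) h
           = shear_change e mv (F_map m e y z) h"
proof (intro allI impI)
  fix h assume h: "h < 3*m"
  show "F_map m (move_tri mv e) (fst (kashaev_change mv (y, z))) (snd (kashaev_change mv (y, z))) h
      = shear_change e mv (F_map m e y z) h"
  proof (cases mv)
    case (Reindex \<alpha>)
    then show ?thesis
      using assms(2) by (simp del: kashaev_change.simps move_tri.simps add: F_map_reindex)
  next
    case (Rotate i)
    then have "y i \<noteq> 0"
      using assms(2,3) by auto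
    with Rotate show ?thesis
      by (simp del: kashaev_change.simps move_tri.simps add: F_map_rotate)
  next
    case (Exchange mu nu)
    then show ?thesis
      using assms h F_map_exchange[of m e mu nu y z h] by simp
  qed
qed

end
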